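(* Let $q$ be a prime power, $\chi$ a multiplicative character of $\mathbb{F}_q^*$ and $\lambda$ an additive character of $\mathbb{F}_q$. For every $n\ge 1$, \[ \sum_{g\in GL(n,q)}\chi(\det g)\,\lambda(\operatorname{tr} g) = \begin{cases} |GL(n,q)| & \text{if } \lambda,\chi \text{ are both trivial},\\ 0 & \text{if } \lambda \text{ is trivial and } \chi \text{ nontrivial},\\ q^{\binom n2}\,G(\chi,\lambda)^n & \text{if } \lambda \text{ is nontrivial}.\end{cases}\]
   Context: $GL(n,q)$ is the group of invertible $n\times n$ matrices over $\mathbb{F}_q$. The Gauss sum is $G(\chi,\lambda)=\sum_{x\in\mathbb{F}_q^*}\chi(x)\lambda(x)$. *)

theory Defs
  imports "HOL-Analysis.Analysis"
begin

definition mult_char :: "('a::field \<Rightarrow> complex) \<Rightarrow> bool" where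
  "mult_char chi \<longleftrightarrow> chi 1 = 1 \<and> (\<forall>x y. x \<noteq> 0 \<longrightarrow> y \<noteq> 0 \<longrightarrow> chi (x * y) = chi x * chi y)"

definition add_char :: "('a::field \<Rightarrow> complex) \<Rightarrow> bool" where
  "add_char psi \<longleftrightarrow> psi 0 = 1 \<and> (\<forall>x y. psi (x + y) = psi x * psi y)"

definition trivial_mult_char :: "('a::field \<Rightarrow> complex) \<Rightarrow> bool" where
  "trivial_mult_char chi \<longleftrightarrow> (\<forall>x. x \<noteq> 0 \<longrightarrow> chi x = 1)"

definition trivial_add_char :: "('a::field \<Rightarrow> complex) \<Rightarrow> bool" where
  "trivial_add_char psi \<longleftrightarrow> (\<forall>x. psi x = 1)"

definition gauss_sum :: "('a::{field,finite} \<Rightarrow> complex) \<Rightarrow> ('a \<Rightarrow> complex) \<Rightarrow> complex" where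
  "gauss_sum chi psi = (\<Sum>x\<in>{x. x \<noteq> 0}. chi x * psi x)"

text \<open>GL(n,q) with n = CARD('n), q = CARD('a).\<close>
definition GL :: "('a::{field,finite}^'n^'n) set" where
  "GL = {A. invertible A}"

end

theory Submission
  imports Defs
begin

text \<open>Let \<open>U\<close> be the group of lower unitriangular matrices. Since \<open>det (u g) = det g\<close>,
  the sum over \<open>GL\<close> equals its average over the translates \<open>u g\<close>, \<open>u \<in> U\<close>. For fixed \<open>g\<close>,
  \<open>u \<mapsto> tr (u g)\<close> is an affine function of the strictly lower entries of \<open>u\<close>, which is
  nonconstant unless \<open>g\<close> is lower triangular; a nontrivial additive character then sums to
  zero over \<open>U\<close>. So only lower triangular \<open>g\<close> contribute, and for those
  \<open>\<chi> (det g) \<lambda> (tr g)\<close> is the product of \<open>\<chi> \<lambda>\<close> over the diagonal: summing over the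
  diagonal gives \<open>G(\<chi>,\<lambda>)\<^sup>n\<close>, and each of the \<open>n choose 2\<close> free entries below it
  contributes a factor \<open>q\<close>. If \<open>\<lambda>\<close> is trivial, the sum is that of \<open>\<chi> \<circ> det\<close> over a group,
  which vanishes for nontrivial \<open>\<chi>\<close>.\<close>

lemma mult_char_prod:
  assumes "mult_char chi" "finite A" "\<And>i. i \<in> A \<Longrightarrow> x i \<noteq> 0"
  shows "chi (prod x A) = (\<Prod>i\<in>A. chi (x i))"
  using assms(2,3)
proof (induction A rule: finite_induct)
  case empty
  then show ?case using assms(1) by (simp add: mult_char_def)
next
  case (insert a A)
  then have "prod x A \<noteq> 0" by auto
  then show ?case using insert assms(1) by (simp add: mult_char_def)
qed

lemma add_char_sum:
  assumes "add_char psi"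
  shows "psi (sum x A) = (\<Prod>i\<in>A. psi (x i))"
proof (cases "finite A")
  case True
  then show ?thesis
    by (induction A rule: finite_induct) (use assms in \<open>auto simp: add_char_def\<close>)
qed (use assms in \<open>simp add: add_char_def\<close>)

lemma sum_eq_0_if_bij_scales:
  fixes F :: "'a \<Rightarrow> 'b::idom"
  assumes "bij_betw \<sigma> S S" and "\<And>x. x \<in> S \<Longrightarrow> F (\<sigma> x) = c * F x" and "c \<noteq> 1"
  shows "sum F S = 0"
proof -
  have "sum F S = (\<Sum>x\<in>S. F (\<sigma> x))"
    using sum.reindex_bij_betw[OF assms(1), of F] by simp
  also have "\<dots> = c * sum F S"
    by (simp add: assms(2) sum_distrib_left)
  finally show ?thesis
    using assms(3) by (metis mult_cancel_right1)
qed

lemma permutes_eq_id_if_rank_le: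
  fixes r :: "'a \<Rightarrow> nat"
  assumes p: "p permutes S" and "finite S" and r: "inj_on r S"
    and le: "\<And>i. i \<in> S \<Longrightarrow> r (p i) \<le> r i"
  shows "p = id"
proof
  fix i
  show "p i = id i"
  proof (cases "i \<in> S")
    case True
    have "(\<Sum>i\<in>S. r (p i)) = (\<Sum>i\<in>S. r i)"
      using sum.permute[OF p, of r] by (simp add: comp_def)
    then have "r (p i) = r i"
      using le True \<open>finite S\<close> by (rule sum_mono_inv)
    then show ?thesis
      using inj_onD[OF r] True by (simp add: permutes_in_image[OF p])
  qed (simp add: permutes_not_in[OF p])
qed

lemma matrix_add_rdistrib: "((A::'a::semiring_1^'m^'n) + B) ** C = A ** C + B ** C"
  by (simp add: vec_eq_iff matrix_matrix_mult_def distrib_right sum.distrib)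

lemma trace_matrix_unit_mult:
  fixes M :: "'a::semiring_1^'n^'n"
  shows "trace ((\<chi> i j. if i = a \<and> j = b then t else 0) ** M) = t * M$b$a"
proof -
  have "(\<Sum>k\<in>UNIV. (if i = a \<and> k = b then t else 0) * M$k$i) = (if i = a then t * M$b$a else 0)" for i
    by (cases "i = a") (simp_all add: if_distrib[of "\<lambda>x. x * _"] cong: if_cong)
  then show ?thesis by (simp add: trace_def matrix_matrix_mult_def)
qed

text \<open>The index type carries no order, so triangularity is taken with respect to a ranking
  \<open>r\<close> of the indices; for injective \<open>r\<close> these are the usual triangular matrices after a
  simultaneous permutation of rows and columns.\<close>

definition lower_triangular :: "('n \<Rightarrow> nat) \<Rightarrow> ('a::zero^'n^'n) set" where
  "lower_triangular r = {A. \<forall>i j. r i < r j \<longrightarrow> A$i$j = 0}"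

definition unilower_triangular :: "('n \<Rightarrow> nat) \<Rightarrow> ('a::{zero,one}^'n^'n) set" where
  "unilower_triangular r = {u \<in> lower_triangular r. \<forall>i. u$i$i = 1}"

definition strictly_lower_triangular :: "('n \<Rightarrow> nat) \<Rightarrow> ('a::zero^'n^'n) set" where
  "strictly_lower_triangular r = {N. \<forall>i j. r i \<le> r j \<longrightarrow> N$i$j = 0}"

lemma det_lower_triangular:
  fixes A :: "'a::comm_ring_1^'n::finite^'n"
  assumes r: "inj r" and A: "A \<in> lower_triangular r"
  shows "det A = (\<Prod>i\<in>UNIV. A$i$i)"
proof -
  let ?term = "\<lambda>p. of_int (sign p) * (\<Prod>i\<in>UNIV. A$i$p i)"
  have "?term p = 0" if p: "p permutes UNIV" "p \<noteq> id" for p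
  proof -
    obtain i where "r i < r (p i)"
      using permutes_eq_id_if_rank_le[OF p(1) _ inj_on_subset[OF r]] p(2)
      by (metis finite not_le subset_UNIV)
    then have "A$i$p i = 0" using A by (simp add: lower_triangular_def)
    then have "(\<Prod>i\<in>UNIV. A$i$p i) = 0" by (intro prod_zero) auto
    then show ?thesis by simp
  qed
  then have "det A = (\<Sum>p\<in>{id}. ?term p)"
    unfolding det_def by (intro sum.mono_neutral_right) (auto simp: permutes_id)
  then show ?thesis by (simp add: sign_id)
qed

lemma det_unilower_triangular:
  assumes "inj r" and "u \<in> unilower_triangular r"
  shows "det (u :: 'a::comm_ring_1^'n::finite^'n) = 1"
  using assms by (simp add: det_lower_triangular unilower_triangular_def)

lemma trace_unilower_mult_lower:
  fixes u M :: "'a::comm_ring_1^'n::finite^'n"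
  assumes r: "inj r" and u: "u \<in> unilower_triangular r" and M: "M \<in> lower_triangular r"
  shows "trace (u ** M) = trace M"
proof -
  have "u$i$k * M$k$i = (if k = i then M$i$i else 0)" for i k
  proof (cases "k = i")
    case False
    then have "r i < r k \<or> r k < r i" using r by (metis inj_def linorder_neqE_nat)
    then show ?thesis
      using u M False by (auto simp: unilower_triangular_def lower_triangular_def)
  qed (use u in \<open>simp add: unilower_triangular_def\<close>)
  then have "(\<Sum>k\<in>UNIV. u$i$k * M$k$i) = M$i$i" for i
    by simp
  then show ?thesis by (simp add: trace_def matrix_matrix_mult_def)
qed

lemma sum_unilower_add_char_trace:
  fixes psi :: "'a::{field,finite} \<Rightarrow> complex" and M :: "'a^'n::finite^'n"
  assumes r: "inj r" and psi: "add_char psi" "\<not> trivial_add_char psi"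
  shows "(\<Sum>u\<in>unilower_triangular r. psi (trace (u ** M))) =
    (if M \<in> lower_triangular r
     then of_nat (card (unilower_triangular r :: ('a^'n^'n) set)) * psi (trace M) else 0)"
proof (cases "M \<in> lower_triangular r")
  case True
  then show ?thesis by (simp add: trace_unilower_mult_lower[OF r])
next
  case False
  then obtain a b where ab: "r b < r a" "M$b$a \<noteq> 0" by (auto simp: lower_triangular_def)
  obtain y where y: "psi y \<noteq> 1" using psi(2) by (auto simp: trivial_add_char_def)
  define E where "E t = ((\<chi> i j. if i = a \<and> j = b then t else 0) :: 'a^'n^'n)" for t
  define t where "t = y / M$b$a"
  have shift: "u + E s \<in> unilower_triangular r" if "u \<in> unilower_triangular r" for u s
    using that ab by (auto simp: unilower_triangular_def lower_triangular_def E_def)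
  have bij: "bij_betw (\<lambda>u. u + E t) (unilower_triangular r) (unilower_triangular r)"
    by (rule bij_betw_byWitness[where f'="\<lambda>u. u + E (- t)"])
      (use shift in \<open>auto simp: vec_eq_iff E_def\<close>)
  have scale: "psi (trace ((u + E t) ** M)) = psi y * psi (trace (u ** M))" for u
    using psi(1) ab(2)
    by (simp add: matrix_add_rdistrib trace_add E_def trace_matrix_unit_mult t_def add_char_def)
  show ?thesis
    using sum_eq_0_if_bij_scales[OF bij, of "\<lambda>u. psi (trace (u ** M))" "psi y"] scale y False
    by simp
qed

lemma GL_eq_det_nonzero: "(GL :: ('a::{field,finite}^'n^'n) set) = {A. det A \<noteq> 0}"
  by (simp add: GL_def invertible_det_nz)

lemma bij_betw_GL_mult_left:
  fixes u :: "'a::{field,finite}^'n^'n"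
  assumes "det u \<noteq> 0"
  shows "bij_betw (\<lambda>g. u ** g) GL GL"
proof -
  obtain v where v: "u ** v = mat 1" "v ** u = mat 1"
    using assms by (auto simp: invertible_det_nz[symmetric] invertible_def)
  then have "det v \<noteq> 0" by (metis det_I det_mul mult_zero_right one_neq_zero)
  then show ?thesis
    using assms v
    by (intro bij_betw_byWitness[where f'="\<lambda>g. v ** g"])
      (auto simp: matrix_mul_assoc GL_eq_det_nonzero det_mul)
qed

lemma sum_GL_mult_char_det:
  fixes chi :: "'a::{field,finite} \<Rightarrow> complex"
  assumes chi: "mult_char chi" "\<not> trivial_mult_char chi"
  shows "(\<Sum>g\<in>(GL :: ('a^'n^'n) set). chi (det g)) = 0"
proof -
  obtain y where y: "y \<noteq> 0" "chi y \<noteq> 1" using chi(2) by (auto simp: trivial_mult_char_def)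
  fix k :: 'n
  define D where "D = ((\<chi> i j. if i = j then (if i = k then y else 1) else 0) :: 'a^'n^'n)"
  have "det D = y"
    by (subst det_diagonal) (auto simp: D_def prod.If_cases)
  then show ?thesis
    using chi(1) y bij_betw_GL_mult_left[of D]
    by (intro sum_eq_0_if_bij_scales[where c="chi y"])
      (auto simp: det_mul mult_char_def GL_eq_det_nonzero)
qed

lemma sum_GL_eq_sum_GL_lower:
  fixes chi psi :: "'a::{field,finite} \<Rightarrow> complex" and r :: "'n::finite \<Rightarrow> nat"
  assumes r: "inj r" and psi: "add_char psi" "\<not> trivial_add_char psi"
  shows "(\<Sum>g\<in>(GL :: ('a^'n^'n) set). chi (det g) * psi (trace g)) =
    (\<Sum>g\<in>GL \<inter> lower_triangular r. chi (det g) * psi (trace g))"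
proof -
  let ?f = "\<lambda>g::'a^'n^'n. chi (det g) * psi (trace g)"
  let ?U = "unilower_triangular r :: ('a^'n^'n) set"
  have "of_nat (card ?U) * (\<Sum>g\<in>GL. ?f g) = (\<Sum>u\<in>?U. \<Sum>g\<in>GL. ?f (u ** g))"
    using sum.reindex_bij_betw[OF bij_betw_GL_mult_left, of _ ?f]
    by (simp add: det_unilower_triangular[OF r])
  also have "\<dots> = (\<Sum>g\<in>GL. chi (det g) * (\<Sum>u\<in>?U. psi (trace (u ** g))))"
    by (subst sum.swap) (simp add: det_mul det_unilower_triangular[OF r] sum_distrib_left)
  also have "\<dots> = (\<Sum>g\<in>GL. if g \<in> lower_triangular r then of_nat (card ?U) * ?f g else 0)"
    by (intro sum.cong) (auto simp: sum_unilower_add_char_trace[OF r psi] mult.left_commute)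
  also have "\<dots> = of_nat (card ?U) * (\<Sum>g\<in>GL \<inter> lower_triangular r. ?f g)"
    by (simp add: sum.If_cases sum_distrib_left)
  finally have "of_nat (card ?U) * (\<Sum>g\<in>GL. ?f g) =
      of_nat (card ?U) * (\<Sum>g\<in>GL \<inter> lower_triangular r. ?f g)" .
  moreover have "mat 1 \<in> ?U" by (simp add: unilower_triangular_def lower_triangular_def mat_def)
  then have "card ?U \<noteq> 0" by (auto simp: card_eq_0_iff)
  ultimately show ?thesis by simp
qed

lemma bij_betw_diag_strictly_lower_GL_lower:
  fixes r :: "'n::finite \<Rightarrow> nat"
  assumes r: "inj r"
  shows "bij_betw (\<lambda>(d, N). \<chi> i j. if i = j then d i else N$i$j)
    (PiE UNIV (\<lambda>_. {x. x \<noteq> 0}) \<times> strictly_lower_triangular r)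
    (GL \<inter> lower_triangular r :: ('a::{field,finite}^'n^'n) set)"
proof -
  let ?L = "GL \<inter> lower_triangular r :: ('a^'n^'n) set"
  let ?join = "\<lambda>(d, N). \<chi> i j. if i = j then d i else N$i$j :: 'a^'n^'n"
  let ?split = "\<lambda>g::'a^'n^'n. (\<lambda>i. g$i$i, \<chi> i j. if r j < r i then g$i$j else 0)"
  have diag_nonzero: "g$i$i \<noteq> 0" if "g \<in> ?L" for g i
    using that by (auto simp: GL_eq_det_nonzero det_lower_triangular[OF r] prod_zero_iff)
  have "r i < r j \<or> r j < r i" if "i \<noteq> j" for i j
    using r that by (metis inj_def linorder_neqE_nat)
  then have "\<forall>g\<in>?L. ?join (?split g) = g"
    by (auto simp: vec_eq_iff lower_triangular_def)
  moreover have "?split ` ?L \<subseteq> PiE UNIV (\<lambda>_. {x. x \<noteq> 0}) \<times> strictly_lower_triangular r"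
    using diag_nonzero by (auto simp: strictly_lower_triangular_def)
  moreover have "?join ` (PiE UNIV (\<lambda>_. {x. x \<noteq> 0}) \<times> strictly_lower_triangular r) \<subseteq> ?L"
    by (auto simp: GL_eq_det_nonzero det_lower_triangular[OF r] lower_triangular_def
        strictly_lower_triangular_def PiE_iff)
  ultimately show ?thesis
    by (intro bij_betw_byWitness[where f'="?split"])
      (auto simp: vec_eq_iff strictly_lower_triangular_def)
qed

lemma sum_GL_lower:
  fixes chi psi :: "'a::{field,finite} \<Rightarrow> complex" and r :: "'n::finite \<Rightarrow> nat"
  assumes r: "inj r" and chi: "mult_char chi" and psi: "add_char psi"
  shows "(\<Sum>g\<in>(GL :: ('a^'n^'n) set) \<inter> lower_triangular r. chi (det g) * psi (trace g)) =
    of_nat (card (strictly_lower_triangular r :: ('a^'n^'n) set)) * gauss_sum chi psi ^ CARD('n)"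
proof -
  let ?D = "PiE UNIV (\<lambda>_. {x::'a. x \<noteq> 0})"
  let ?S = "strictly_lower_triangular r :: ('a^'n^'n) set"
  let ?h = "\<lambda>d::'n \<Rightarrow> 'a. \<Prod>i\<in>UNIV. chi (d i) * psi (d i)"
  have diag: "chi (det g) * psi (trace g) = ?h (\<lambda>i. g$i$i)" if "g \<in> GL \<inter> lower_triangular r" for g
  proof -
    have "det g = (\<Prod>i\<in>UNIV. g$i$i)"
      using that det_lower_triangular[OF r] by blast
    moreover from this have "g$i$i \<noteq> 0" for i
      using that by (auto simp: GL_eq_det_nonzero)
    ultimately show ?thesis
      using mult_char_prod[OF chi, of UNIV "\<lambda>i. g$i$i"] add_char_sum[OF psi, of "\<lambda>i. g$i$i" UNIV]
      by (simp add: trace_def prod.distrib)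
  qed
  have "(\<Sum>g\<in>GL \<inter> lower_triangular r. chi (det g) * psi (trace g)) =
      (\<Sum>g\<in>GL \<inter> lower_triangular r. ?h (\<lambda>i. g$i$i))"
    by (rule sum.cong) (simp_all add: diag)
  also have "\<dots> = (\<Sum>(d, N)\<in>?D \<times> ?S. ?h d)"
    using sum.reindex_bij_betw[OF bij_betw_diag_strictly_lower_GL_lower[OF r],
        of "\<lambda>g. ?h (\<lambda>i. g$i$i)", symmetric]
    by (simp add: case_prod_beta)
  also have "\<dots> = of_nat (card ?S) * (\<Sum>d\<in>?D. ?h d)"
    by (simp add: sum.cartesian_product[symmetric] sum_distrib_left mult.commute)
  also have "(\<Sum>d\<in>?D. ?h d) = gauss_sum chi psi ^ CARD('n)"
    using prod_sum_PiE[of "UNIV :: 'n set" "\<lambda>_. {x::'a. x \<noteq> 0}" "\<lambda>_ x. chi x * psi x"]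
    by (simp add: gauss_sum_def)
  finally show ?thesis .
qed

lemma card_pairs_rank_less:
  fixes r :: "'n::finite \<Rightarrow> nat"
  assumes r: "bij_betw r UNIV {..<CARD('n)}"
  shows "card {(i, j). r j < r i} = CARD('n) choose 2"
proof -
  have "card {j. r j < r i} = r i" for i
  proof -
    have "{j. r j < r i} = r -` {..<r i}" by auto
    moreover have "r i < CARD('n)" using bij_betwE[OF r] by blast
    then have "{..<r i} \<subseteq> range r" using r by (auto simp: bij_betw_def)
    ultimately show ?thesis using r by (simp add: card_vimage_inj bij_betw_def)
  qed
  moreover have "{(i, j). r j < r i} = (SIGMA i:UNIV. {j. r j < r i})" by auto
  ultimately have "card {(i, j). r j < r i} = (\<Sum>i\<in>UNIV. r i)"
    by (simp add: card_SigmaI)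
  also have "\<dots> = (\<Sum>k<CARD('n). k)"
    using sum.reindex_bij_betw[OF r, of id] by simp
  also have "\<dots> = CARD('n) choose 2"
    using Sum_Ico_nat[of 0 "CARD('n)"] by (simp add: choose_two lessThan_atLeast0)
  finally show ?thesis .
qed

lemma card_strictly_lower_triangular:
  fixes r :: "'n::finite \<Rightarrow> nat"
  assumes r: "bij_betw r UNIV {..<CARD('n)}"
  shows "card (strictly_lower_triangular r :: ('a::{zero,finite}^'n^'n) set) =
    CARD('a) ^ (CARD('n) choose 2)"
proof -
  let ?P = "{(i, j). r j < r i}"
  have "bij_betw (\<lambda>N. restrict (\<lambda>(i, j). N$i$j) ?P)
      (strictly_lower_triangular r :: ('a^'n^'n) set) (PiE ?P (\<lambda>_. UNIV))"
    by (rule bij_betw_byWitness[where f'="\<lambda>f. \<chi> i j. if r j < r i then f (i, j) else 0"])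
      (auto simp: strictly_lower_triangular_def vec_eq_iff fun_eq_iff PiE_def extensional_def)
  then show ?thesis
    by (simp add: bij_betw_same_card card_PiE card_pairs_rank_less[OF r])
qed

lemma sum_GL_mult_char_det_add_char_trace_nontrivial:
  fixes chi psi :: "'a::{field,finite} \<Rightarrow> complex"
  assumes chi: "mult_char chi" and psi: "add_char psi" "\<not> trivial_add_char psi"
  shows "(\<Sum>g\<in>(GL :: ('a^'n^'n) set). chi (det g) * psi (trace g)) =
    of_nat CARD('a) ^ (CARD('n) choose 2) * gauss_sum chi psi ^ CARD('n)"
proof -
  obtain r :: "'n \<Rightarrow> nat" where r: "bij_betw r UNIV {..<CARD('n)}"
    using ex_bij_betw_finite_nat[of "UNIV :: 'n set"] by (auto simp: lessThan_atLeast0)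
  then have "inj r" by (simp add: bij_betw_def)
  then show ?thesis
    using sum_GL_eq_sum_GL_lower[OF \<open>inj r\<close> psi, of chi] sum_GL_lower[OF \<open>inj r\<close> chi psi(1)]
      card_strictly_lower_triangular[OF r, where 'a='a] by simp
qed

theorem theorem1:
  fixes chi psi :: "'a::{field,finite} \<Rightarrow> complex"
  assumes "mult_char chi" and "add_char psi"
  shows "(\<Sum>g\<in>(GL :: ('a^'n^'n) set). chi (det g) * psi (trace g)) =
    (if trivial_add_char psi \<and> trivial_mult_char chi then of_nat (card (GL :: ('a^'n^'n) set))
     else if trivial_add_char psi then 0
     else of_nat CARD('a) ^ (CARD('n) choose 2) * gauss_sum chi psi ^ CARD('n))"
proof (cases "trivial_add_char psi")
  case True
  then have "psi (trace g) = 1" for g :: "'a^'n^'n"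
    by (simp add: trivial_add_char_def)
  moreover have "chi (det g) = 1" if "trivial_mult_char chi" "g \<in> GL" for g :: "'a^'n^'n"
    using that by (simp add: trivial_mult_char_def GL_eq_det_nonzero)
  ultimately show ?thesis
    using True sum_GL_mult_char_det[OF assms(1), where 'n='n] by simp
next
  case False
  then show ?thesis
    using sum_GL_mult_char_det_add_char_trace_nontrivial[OF assms False] by simp
qed

end
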